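(* Let $X$ be a compact subset of $K$, or more generally any compact Hausdorff totally disconnected topological space, and let $\{f_n\}_{n\ge0}$ be an orthonormal basis of $C(X,K)$. Then for every positive integer $m$: (1) $\{f_n^{q^m}\}_{n\ge0}$ is an orthonormal basis of $C(X,K)$; (2) $\{f_n^{1/q^m}\}_{n\ge0}$ is an orthonormal basis of $C(X,K_m)$.
   Context: Let $q$ be a prime power, $K=\mathbf{F}_q((T))$ with $T$-adic absolute value $|x|=q^{-v(x)}$. For an integer $m\ge1$, $K_m=K(T^{1/q^m})=\mathbf{F}_q((T^{1/q^m}))$ with the extended absolute value; every element of $K$ has a unique $q^m$-th root in $K_m$, and $f^{1/q^m}$ denotes the pointwise $q^m$-th root $x\mapsto f(x)^{1/q^m}$. For a field $L\in\{K,K_m\}$, $C(X,L)$ is the $L$-Banach space of continuous functions $X\to L$ with sup-norm; a sequence $(g_n)$ in it is an orthonormal basis if every $g$ can be written uniquely as $g=\sum a_ng_n$ with $a_n\in L$, $a_n\to0$, and then $\|g\|=\max|a_n|$. *)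

theory Defs
  imports "HOL-Analysis.Analysis" "HOL-Computational_Algebra.Formal_Laurent_Series"
begin

text \<open>The finite field F_q is a type 'a of class {field, finite}; q = CARD('a).
  K = F_q((T)) is 'a fls.  K_m = F_q((U)) with U = T^(1/q^m) is also modelled by
  'a fls (in the variable U); K embeds into K_m via T |-> U^(q^m).\<close>

definition totally_disconnected :: "'x::topological_space set \<Rightarrow> bool" where
  "totally_disconnected S \<longleftrightarrow> (\<forall>C. C \<subseteq> S \<longrightarrow> connected C \<longrightarrow> (\<exists>a. C \<subseteq> {a}))"

definition absK :: "'a::{field,finite} fls \<Rightarrow> real" where
  "absK x = (if x = 0 then 0 else real CARD('a) powr (- real_of_int (fls_subdegree x)))"

definition absKm :: "nat \<Rightarrow> 'a::{field,finite} fls \<Rightarrow> real" where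
  "absKm m x = (if x = 0 then 0 else
     real CARD('a) powr (- real_of_int (fls_subdegree x) / real (CARD('a) ^ m)))"

definition embKm :: "nat \<Rightarrow> 'a::{field,finite} fls \<Rightarrow> 'a fls" where
  "embKm m x = fls_compose_power x (CARD('a) ^ m)"

definition qroot :: "nat \<Rightarrow> 'a::{field,finite} fls \<Rightarrow> 'a fls" where
  "qroot m y = (THE z. z ^ (CARD('a) ^ m) = embKm m y)"

definition supnorm :: "('b \<Rightarrow> real) \<Rightarrow> 'x set \<Rightarrow> ('x \<Rightarrow> 'b) \<Rightarrow> real" where
  "supnorm av S f = Sup (insert 0 ((\<lambda>x. av (f x)) ` S))"

definition orthonormal_basis ::
  "('b::{field,metric_space} \<Rightarrow> real) \<Rightarrow> 'x::topological_space set \<Rightarrow> (nat \<Rightarrow> 'x \<Rightarrow> 'b) \<Rightarrow> bool" where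
  "orthonormal_basis av S g \<longleftrightarrow>
     (\<forall>n. continuous_on S (g n)) \<and>
     (\<forall>h. continuous_on S h \<longrightarrow>
        (\<exists>!a. (\<lambda>n. av (a n)) \<longlonglongrightarrow> 0 \<and>
              (\<lambda>N. supnorm av S (\<lambda>x. h x - (\<Sum>n<N. a n * g n x))) \<longlonglongrightarrow> 0) \<and>
        (\<forall>a. (\<lambda>n. av (a n)) \<longlonglongrightarrow> 0 \<and>
              (\<lambda>N. supnorm av S (\<lambda>x. h x - (\<Sum>n<N. a n * g n x))) \<longlonglongrightarrow> 0 \<longrightarrow>
              supnorm av S h = (SUP n. av (a n))))"

end

(*
  Since a^q = a on F_q and the q^m-th power map is additive in characteristic p, raising a
  series to the power Q = q^m amounts to the substitution T |-> T^Q.  So (1) is an instance of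
  the following fact, valid for every d > 0: if (f_n) is an orthonormal basis of C(X,K), so is
  (f_n(T^d)).  Every y in K splits uniquely as y = sum_{j<d} T^j s_j(T^d), and |y| <= B holds iff
  |s_j|^d <= q^j B for all j < d, because the summands have distinct valuations modulo d.  Taking
  these sections pointwise turns an expansion of h in the f_n(T^d) into expansions of the
  continuous functions s_j o h in the f_n and back, which yields existence and uniqueness of
  coefficients as well as the identity between the sup-norm and the maximal coefficient.
  For (2), the q^m-th root of y(T) in K_m = F_q((U)), U^(q^m) = T, is y(U), and |y(U)| is the
  q^m-th root of |y(T)|; so f_n^(1/q^m) is an orthonormal basis because taking roots of
  absolute values commutes with sup-norms and limits.
*)
theory Submission
  imports Defs
begin

unbundle fps_syntax

section \<open>Frobenius on F_q((T))\<close>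

lemma card_field_ge_2: "2 \<le> CARD('a::{field,finite})"
proof -
  have "card {0::'a, 1} \<le> CARD('a)" by (rule card_mono) auto
  then show ?thesis by simp
qed

lemma power_card_eq_self:
  fixes x :: "'a::{field,finite}"
  shows "x ^ CARD('a) = x"
proof (cases "x = 0")
  case False
  define U where "U = UNIV - {0::'a}"
  have "(\<Prod>y\<in>U. x * y) = \<Prod>U"
    unfolding U_def
    by (rule prod.reindex_bij_witness[of _ "\<lambda>y. y / x" "\<lambda>y. x * y"]) (use False in simp_all)
  then have "x ^ card U * \<Prod>U = 1 * \<Prod>U"
    by (simp only: prod.distrib prod_constant mult_1)
  moreover have "\<Prod>U \<noteq> 0"
    unfolding U_def by (subst prod_zero_iff) auto
  ultimately have "x ^ card U = 1"
    by (rule mult_right_cancel[THEN iffD1, rotated])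
  moreover have "CARD('a) = Suc (card U)"
    using card_field_ge_2[where 'a='a] unfolding U_def by (simp add: card_Diff_singleton)
  ultimately show ?thesis by (simp only: power_Suc2 mult_1)
qed (use card_field_ge_2[where 'a='a] in simp)

lemma power_card_pow_eq_self:
  fixes x :: "'a::{field,finite}"
  shows "x ^ (CARD('a) ^ m) = x"
  by (induction m) (simp_all add: power_card_eq_self power_mult)

text \<open>\<open>(1 + X)^q - X^q\<close> has degree \<open>< q\<close> and takes the value \<open>1\<close> at all \<open>q\<close> points
  of the field, so it is the constant polynomial \<open>1\<close>.\<close>
lemma of_nat_card_choose_eq_0:
  assumes "0 < k" "k < CARD('a::{field,finite})"
  shows "of_nat (CARD('a) choose k) = (0::'a)"
proof -
  define p :: "'a poly" where "p = [:1, 1:] ^ CARD('a) - monom 1 (CARD('a))"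
  have coeff_p: "coeff p i = of_nat (CARD('a) choose i) - (if i = CARD('a) then 1 else 0)" for i
  proof (cases "i \<le> CARD('a)")
    case True
    then show ?thesis by (simp add: p_def coeff_monom coeff_linear_poly_power)
  next
    case False
    then have "coeff ([:1::'a, 1:] ^ CARD('a)) i = 0"
      by (intro coeff_eq_0) (simp add: degree_linear_power)
    with False show ?thesis by (simp add: p_def coeff_monom binomial_eq_0)
  qed
  have "degree p \<le> CARD('a) - 1"
    by (rule degree_le) (auto simp: coeff_p binomial_eq_0)
  then have "degree p < CARD('a)"
    using card_field_ge_2[where 'a='a] by linarith
  moreover have "poly p x = poly 1 x" for x
    by (simp add: p_def poly_monom power_card_eq_self)
  ultimately have "p = 1"
    using card_field_ge_2[where 'a='a] by (intro poly_eqI_degree[of UNIV]) auto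
  then have "coeff p k = 0" using assms by simp
  then show ?thesis using assms by (simp add: coeff_p)
qed

lemma add_power_eq_if_binomials_vanish:
  fixes x y :: "'b::comm_semiring_1"
  assumes "0 < n" and "\<And>k. 0 < k \<Longrightarrow> k < n \<Longrightarrow> of_nat (n choose k) = (0::'b)"
  shows "(x + y) ^ n = x ^ n + y ^ n"
proof -
  have "(x + y) ^ n = (\<Sum>k\<le>n. of_nat (n choose k) * x ^ k * y ^ (n - k))"
    by (rule binomial_ring)
  also have "\<dots> = (\<Sum>k\<in>{0, n}. of_nat (n choose k) * x ^ k * y ^ (n - k))"
    using assms by (intro sum.mono_neutral_right) auto
  also have "\<dots> = x ^ n + y ^ n"
    using assms(1) by (simp add: add.commute)
  finally show ?thesis .
qed

lemma fls_add_power_card_pow: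
  fixes x y :: "'a::{field,finite} fls"
  shows "(x + y) ^ (CARD('a) ^ m) = x ^ (CARD('a) ^ m) + y ^ (CARD('a) ^ m)"
proof (induction m)
  case (Suc m)
  have "(u + w) ^ CARD('a) = u ^ CARD('a) + w ^ CARD('a)" for u w :: "'a fls"
    by (rule add_power_eq_if_binomials_vanish) (simp_all add: fls_of_nat of_nat_card_choose_eq_0)
  then show ?case
    using Suc by (simp only: power_Suc2 power_mult)
qed simp

lemma fls_subdegree_compose_power:
  assumes "d > 0"
  shows "fls_subdegree (fls_compose_power z d) = int d * fls_subdegree z"
proof (cases "z = 0")
  case False
  show ?thesis
  proof (rule fls_subdegree_eqI)
    show "fls_compose_power z d $$ (int d * fls_subdegree z) \<noteq> 0"
      using assms False by (simp add: fls_nth_compose_power)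
    fix k assume k: "k < int d * fls_subdegree z"
    show "fls_compose_power z d $$ k = 0"
    proof (cases "int d dvd k")
      case True
      then obtain i where "k = int d * i" by blast
      with k assms show ?thesis by (simp add: fls_nth_compose_power)
    qed (simp add: assms fls_nth_compose_power)
  qed
qed simp

text \<open>Peel off the leading term \<open>c T^v\<close>: it satisfies the claim because \<open>c^Q = c\<close>, and the
  rest has larger subdegree, so the induction measure \<open>n - Q v\<close> drops.\<close>
lemma fls_power_card_pow_eq_compose_power:
  fixes y :: "'a::{field,finite} fls"
  shows "y ^ (CARD('a) ^ m) = fls_compose_power y (CARD('a) ^ m)"
proof (rule fls_eqI)
  fix n :: int
  define Q where "Q = CARD('a) ^ m"
  have Q: "Q > 0" by (simp add: Q_def)
  have "(y ^ Q) $$ n = fls_compose_power y Q $$ n"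
  proof (induction "nat (n - int Q * fls_subdegree y + 1)" arbitrary: y rule: less_induct)
    case less
    consider "y = 0" | "y \<noteq> 0" "n < int Q * fls_subdegree y" | "y \<noteq> 0" "int Q * fls_subdegree y \<le> n"
      by fastforce
    then show ?case
    proof cases
      case 1
      then show ?thesis using Q by (simp add: zero_power)
    next
      case 2
      then show ?thesis by (simp add: Q fls_subdegree_pow fls_subdegree_compose_power)
    next
      case 3
      define v where "v = fls_subdegree y"
      define lead where "lead = fls_shift (- v) (fls_const (y $$ v))"
      define rest where "rest = y - lead"
      have lead_nth: "lead $$ k = (if k = v then y $$ v else 0)" for k
        by (simp add: lead_def)
      have "lead ^ Q = fls_compose_power lead Q"
        using Q by (simp add: lead_def fls_shifted_pow power_card_pow_eq_self Q_def
            flip: fls_const_power)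
      moreover have "(rest ^ Q) $$ n = fls_compose_power rest Q $$ n"
      proof (cases "rest = 0")
        case False
        have "v + 1 \<le> fls_subdegree rest"
          by (rule fls_subdegree_geI[OF False]) (auto simp: rest_def lead_nth v_def)
        then have "int Q * v < int Q * fls_subdegree rest"
          using Q by simp
        then have "nat (n - int Q * fls_subdegree rest + 1) < nat (n - int Q * fls_subdegree y + 1)"
          using 3 Q by (simp add: v_def algebra_simps)
        then show ?thesis by (rule less.hyps)
      qed (use Q in \<open>simp add: zero_power\<close>)
      moreover have "y ^ Q = lead ^ Q + rest ^ Q"
        using fls_add_power_card_pow[of lead rest m] by (simp add: rest_def Q_def)
      moreover have "fls_compose_power y Q = fls_compose_power lead Q + fls_compose_power rest Q"
        by (simp add: rest_def)
      ultimately show ?thesis by simp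
    qed
  qed
  then show "(y ^ CARD('a) ^ m) $$ n = fls_compose_power y (CARD('a) ^ m) $$ n"
    by (simp add: Q_def)
qed

section \<open>The T-adic absolute value\<close>

lemma absK_nonneg: "0 \<le> absK x"
  by (simp add: absK_def)

lemma absK_0 [simp]: "absK 0 = 0"
  by (simp add: absK_def)

lemma absK_mult: "absK (x * y) = absK x * absK (y :: 'a::{field,finite} fls)"
  by (simp add: absK_def fls_subdegree_mult powr_add[symmetric] algebra_simps)

lemma absK_shift_compose_power:
  fixes z :: "'a::{field,finite} fls"
  assumes "d > 0"
  shows "absK (fls_shift (- int j) (fls_compose_power z d)) = absK z ^ d / real CARD('a) ^ j"
proof (cases "z = 0")
  case False
  define v where "v = real_of_int (fls_subdegree z)"
  have q: "real CARD('a) > 0" by simp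
  have "fls_compose_power z d \<noteq> 0"
    by (intro fls_nonzeroI[of _ "int d * fls_subdegree z"]) (use assms False in \<open>simp add: fls_nth_compose_power\<close>)
  then have "absK (fls_shift (- int j) (fls_compose_power z d)) = real CARD('a) powr (- (real d * v) - real j)"
    using assms by (simp add: absK_def fls_shift_eq0_iff fls_subdegree_compose_power v_def)
  also have "\<dots> = (real CARD('a) powr (- v)) ^ d / real CARD('a) powr (real j)"
    using q by (simp add: powr_diff powr_power)
  also have "\<dots> = absK z ^ d / real CARD('a) ^ j"
    using False q by (simp add: absK_def v_def powr_realpow)
  finally show ?thesis .
qed (use assms in simp)

lemma absK_le_if_vanishes_below:
  fixes x y :: "'a::{field,finite} fls"
  assumes "y \<noteq> 0" and "\<And>k. k < fls_subdegree y \<Longrightarrow> x $$ k = 0"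
  shows "absK x \<le> absK y"
proof (cases "x = 0")
  case False
  then have "fls_subdegree y \<le> fls_subdegree x"
    using assms(2) by (rule fls_subdegree_geI)
  then show ?thesis
    using False assms(1) card_field_ge_2[where 'a='a] by (simp add: absK_def)
qed (simp add: absK_nonneg)

lemma absK_add_le_max: "absK (x + y) \<le> max (absK x) (absK (y :: 'a::{field,finite} fls))"
proof -
  have "absK (x + y) \<le> absK z" if "z \<in> {x, y}" "z \<noteq> 0"
    "fls_subdegree z = min (fls_subdegree x) (fls_subdegree y)" for z
    using that by (intro absK_le_if_vanishes_below) auto
  then show ?thesis
    by (cases "x = 0"; cases "y = 0") (fastforce simp: min_def split: if_splits)+
qed

lemma absK_sum_le:
  fixes f :: "'b \<Rightarrow> 'a::{field,finite} fls"
  assumes "0 \<le> B" and "\<And>i. i \<in> A \<Longrightarrow> absK (f i) \<le> B"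
  shows "absK (sum f A) \<le> B"
  using assms
  by (induction A rule: infinite_finite_induct) (auto intro: order.trans[OF absK_add_le_max])

section \<open>Sections with respect to F_q((T^d))\<close>

text \<open>Every series decomposes as \<open>y = (\<Sum>j<d. T^j s\<^sub>j(T^d))\<close>, where the section
  \<open>s\<^sub>j = fls_section d j y\<close> collects the coefficients of \<open>y\<close> in the degrees \<open>\<equiv> j (mod d)\<close>;
  \<open>fls_of_sections\<close> reassembles \<open>y\<close> from its sections.\<close>
lift_definition fls_section :: "nat \<Rightarrow> nat \<Rightarrow> 'a::zero fls \<Rightarrow> 'a fls" is
  "\<lambda>d j f k. if d > 0 then f (k * int d + int j) else 0"
proof -
  fix d j :: nat and f :: "int \<Rightarrow> 'a"
  assume "\<forall>\<^sub>\<infinity>n. f (- int n) = 0"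
  then obtain M where M: "\<And>n. n > M \<Longrightarrow> f (- int n) = 0"
    by (auto simp: MOST_nat)
  have "(if d > 0 then f (- int n * int d + int j) else 0) = 0" if "n > M + j" for n
  proof (cases "d > 0")
    case True
    then have "n * d \<ge> n" by simp
    then have "j \<le> n * d" and M_less: "M < n * d - j"
      using that by linarith+
    then have "- int n * int d + int j = - int (n * d - j)"
      by (simp add: of_nat_diff)
    with M[OF M_less] True show ?thesis by simp
  qed simp
  then show "\<forall>\<^sub>\<infinity>n. (if d > 0 then f (- int n * int d + int j) else 0) = 0"
    unfolding MOST_nat by blast
qed

lemma fls_nth_section: "d > 0 \<Longrightarrow> fls_section d j f $$ k = f $$ (k * int d + int j)"
  by transfer simp

lemma fls_section_0 [simp]: "fls_section d j 0 = 0"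
  by transfer simp

lemma fls_section_add:
  "fls_section d j (f + g) = fls_section d j f + fls_section d j (g :: 'a::monoid_add fls)"
  by transfer auto

lemma fls_section_diff:
  "fls_section d j (f - g) = fls_section d j f - fls_section d j (g :: 'a::group_add fls)"
  by transfer auto

lemma fls_section_sum:
  "fls_section d j (\<Sum>i\<in>A. f i) = (\<Sum>i\<in>A. fls_section d j (f i :: 'a::comm_monoid_add fls))"
  by (induction A rule: infinite_finite_induct) (auto simp: fls_section_add)

definition fls_of_sections :: "nat \<Rightarrow> (nat \<Rightarrow> 'a::comm_monoid_add fls) \<Rightarrow> 'a fls" where
  "fls_of_sections d b = (\<Sum>j<d. fls_shift (- int j) (fls_compose_power (b j) d))"

lemma fls_nth_of_sections:
  assumes "d > 0"
  shows "fls_of_sections d b $$ n = b (nat (n mod int d)) $$ (n div int d)"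
proof -
  have dvd_iff: "int d dvd n - int j \<longleftrightarrow> j = nat (n mod int d)" if "j < d" for j
    using that assms by (auto simp: mod_eq_dvd_iff[symmetric] nat_mod_as_int)
  have "fls_of_sections d b $$ n
      = (\<Sum>j<d. if j = nat (n mod int d) then b j $$ ((n - int j) div int d) else 0)"
    unfolding fls_of_sections_def fls_nth_sum
    using assms dvd_iff by (intro sum.cong) (auto simp: fls_nth_compose_power)
  also have "\<dots> = b (nat (n mod int d)) $$ (n div int d)"
    using assms by (simp add: nat_less_iff minus_mod_eq_mult_div)
  finally show ?thesis .
qed

lemma fls_of_sections_section:
  assumes "d > 0"
  shows "fls_of_sections d (\<lambda>j. fls_section d j f) = f"
  using assms by (intro fls_eqI) (simp add: fls_nth_of_sections fls_nth_section)

lemma fls_section_of_sections: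
  assumes "j < d"
  shows "fls_section d j (fls_of_sections d b) = b j"
proof (rule fls_eqI)
  fix k
  have "(k * int d + int j) mod int d = int j" and "(k * int d + int j) div int d = k"
    using assms by simp_all
  then show "fls_section d j (fls_of_sections d b) $$ k = b j $$ k"
    using assms by (simp add: fls_nth_section fls_nth_of_sections)
qed

lemma fls_sections_eqI:
  fixes f g :: "'a::comm_monoid_add fls"
  assumes "d > 0" and "\<And>j. j < d \<Longrightarrow> fls_section d j f = fls_section d j g"
  shows "f = g"
proof -
  have "fls_of_sections d (\<lambda>j. fls_section d j f) = fls_of_sections d (\<lambda>j. fls_section d j g)"
    unfolding fls_of_sections_def using assms(2) by simp
  then show ?thesis by (simp add: fls_of_sections_section assms(1))
qed

lemma fls_section_mult_compose_power:
  fixes f c :: "'a::idom fls"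
  assumes "j < d"
  shows "fls_section d j (f * fls_compose_power c d) = fls_section d j f * c"
proof -
  have "f * fls_compose_power c d = fls_of_sections d (\<lambda>i. fls_section d i f) * fls_compose_power c d"
    using assms by (simp add: fls_of_sections_section)
  also have "\<dots> = fls_of_sections d (\<lambda>i. fls_section d i f * c)"
    by (simp add: fls_of_sections_def sum_distrib_right fls_shifted_times_simps)
  finally show ?thesis
    using assms by (simp add: fls_section_of_sections)
qed

lemma absK_section_pow_le:
  fixes y :: "'a::{field,finite} fls"
  assumes "j < d"
  shows "absK (fls_section d j y) ^ d \<le> real CARD('a) ^ j * absK y"
proof -
  define t where "t = fls_shift (- int j) (fls_compose_power (fls_section d j y) d)"
  have t_nth: "t $$ n = (if int d dvd n - int j then y $$ n else 0)" for n
    using assms by (auto simp: t_def fls_nth_compose_power fls_nth_section)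
  have "absK t \<le> absK y"
  proof (cases "y = 0")
    case True
    then have "t = 0" by (intro fls_eqI) (simp add: t_nth)
    then show ?thesis by (simp add: absK_nonneg)
  qed (auto intro: absK_le_if_vanishes_below simp: t_nth)
  moreover have "absK t = absK (fls_section d j y) ^ d / real CARD('a) ^ j"
    using assms by (simp add: t_def absK_shift_compose_power)
  ultimately show ?thesis
    by (simp add: divide_le_eq mult.commute)
qed

lemma absK_le_if_sections_pow_le:
  fixes y :: "'a::{field,finite} fls"
  assumes "d > 0" and "0 \<le> B"
    and "\<And>j. j < d \<Longrightarrow> absK (fls_section d j y) ^ d \<le> real CARD('a) ^ j * B"
  shows "absK y \<le> B"
proof -
  have "absK (fls_of_sections d (\<lambda>j. fls_section d j y)) \<le> B"
    unfolding fls_of_sections_def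
    using assms by (intro absK_sum_le) (simp_all add: absK_shift_compose_power divide_le_eq mult.commute)
  then show ?thesis by (simp add: fls_of_sections_section assms(1))
qed

lemma le_root_iff_power_le:
  fixes t c :: real
  assumes "0 < n" and "0 \<le> t"
  shows "t \<le> root n c \<longleftrightarrow> t ^ n \<le> c"
  using real_root_le_iff[OF assms(1), of "t ^ n" c] real_root_power_cancel[OF assms] by simp

lemma absK_le_iff_sections:
  fixes y :: "'a::{field,finite} fls"
  assumes "d > 0" and "0 \<le> B"
  shows "absK y \<le> B \<longleftrightarrow> (\<forall>j<d. absK (fls_section d j y) \<le> root d (real CARD('a) ^ j * B))"
proof -
  have "absK (fls_section d j y) ^ d \<le> real CARD('a) ^ j * B" if "absK y \<le> B" "j < d" for j
    by (rule order.trans[OF absK_section_pow_le[OF that(2)] mult_left_mono[OF that(1)]]) simp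
  then show ?thesis
    using absK_le_if_sections_pow_le[OF assms, of y]
    by (auto simp: le_root_iff_power_le[OF assms(1) absK_nonneg])
qed

lemma absK_section_le_root:
  fixes y :: "'a::{field,finite} fls"
  assumes "j < d"
  shows "absK (fls_section d j y) \<le> root d (real CARD('a) ^ j * absK y)"
  using absK_section_pow_le[OF assms, of y] assms
  by (simp add: le_root_iff_power_le absK_nonneg)

lemma absK_le_sum_sections:
  fixes y :: "'a::{field,finite} fls"
  assumes "d > 0"
  shows "absK y \<le> (\<Sum>j<d. absK (fls_section d j y) ^ d)"
proof (rule absK_le_if_sections_pow_le[OF assms])
  show "0 \<le> (\<Sum>j<d. absK (fls_section d j y) ^ d)"
    by (simp add: absK_nonneg sum_nonneg)
  fix j assume "j < d"
  then have "absK (fls_section d j y) ^ d \<le> (\<Sum>j<d. absK (fls_section d j y) ^ d)"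
    by (intro member_le_sum) (simp_all add: absK_nonneg)
  also have "\<dots> \<le> real CARD('a) ^ j * (\<Sum>j<d. absK (fls_section d j y) ^ d)"
    using mult_right_mono[of 1 "real CARD('a) ^ j" "\<Sum>j<d. absK (fls_section d j y) ^ d"]
    by (simp add: absK_nonneg sum_nonneg)
  finally show "absK (fls_section d j y) ^ d \<le> real CARD('a) ^ j * (\<Sum>j<d. absK (fls_section d j y) ^ d)" .
qed

section \<open>Continuity of functions into F_q((T))\<close>

lemma tendsto_0_if_nonneg_le:
  fixes X Y :: "'b \<Rightarrow> real"
  assumes "\<And>n. 0 \<le> X n" and "\<And>n. X n \<le> Y n" and "(Y \<longlongrightarrow> 0) F"
  shows "(X \<longlongrightarrow> 0) F"
  by (rule tendsto_sandwich[OF always_eventually always_eventually tendsto_const assms(3)])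
    (simp_all add: assms(1,2))

lemma absK_eq_dist_powr:
  fixes y :: "'a::{field,finite} fls"
  shows "absK y = dist y 0 powr log 2 (real CARD('a))"
proof (cases "y = 0")
  case False
  define v where "v = real_of_int (fls_subdegree y)"
  have "dist y 0 = 2 powr (- v)"
    using False by (cases "fls_subdegree y \<ge> 0") (simp_all add: dist_fls_def v_def powr_minus powr_realpow[symmetric])
  then have "dist y 0 powr log 2 (real CARD('a)) = (2 powr log 2 (real CARD('a))) powr (- v)"
    by (simp only: powr_powr mult.commute)
  also have "\<dots> = real CARD('a) powr (- v)"
    using card_field_ge_2[where 'a='a] by simp
  finally show ?thesis
    using False by (simp add: absK_def v_def)
qed simp

lemma tendsto_fls_iff_absK:
  fixes g :: "'b \<Rightarrow> 'a::{field,finite} fls"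
  shows "(g \<longlongrightarrow> l) F \<longleftrightarrow> ((\<lambda>x. absK (g x - l)) \<longlongrightarrow> 0) F"
proof -
  define c where "c = log 2 (real CARD('a))"
  have c: "c > 0" using card_field_ge_2[where 'a='a] by (simp add: c_def)
  define D where "D x = dist (g x - l) 0" for x
  have D: "0 \<le> D x" for x by (simp add: D_def)
  have "(\<lambda>x. dist (g x) l) = D"
    by (simp add: D_def dist_fls_def fun_eq_iff)
  then have "(g \<longlongrightarrow> l) F \<longleftrightarrow> (D \<longlongrightarrow> 0) F"
    using tendsto_dist_iff[of g l F] by simp
  also have "\<dots> \<longleftrightarrow> ((\<lambda>x. D x powr c) \<longlongrightarrow> 0) F"
  proof
    assume "(D \<longlongrightarrow> 0) F"
    then show "((\<lambda>x. D x powr c) \<longlongrightarrow> 0) F"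
      using tendsto_zero_powrI[of D F "\<lambda>_. c" c] c D by simp
  next
    assume "((\<lambda>x. D x powr c) \<longlongrightarrow> 0) F"
    then have "((\<lambda>x. (D x powr c) powr (1 / c)) \<longlongrightarrow> 0) F"
      using tendsto_zero_powrI[of "\<lambda>x. D x powr c" F "\<lambda>_. 1 / c" "1 / c"] c by simp
    moreover have "(D x powr c) powr (1 / c) = D x" for x
      using c D[of x] by (simp add: powr_powr)
    ultimately show "(D \<longlongrightarrow> 0) F" by simp
  qed
  also have "(\<lambda>x. D x powr c) = (\<lambda>x. absK (g x - l))"
    by (simp add: absK_eq_dist_powr D_def c_def)
  finally show ?thesis .
qed

lemma continuous_on_fls_iff:
  fixes g :: "'x::topological_space \<Rightarrow> 'a::{field,finite} fls"
  shows "continuous_on S g \<longleftrightarrow> (\<forall>x\<in>S. ((\<lambda>y. absK (g y - g x)) \<longlongrightarrow> 0) (at x within S))"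
  unfolding continuous_on_def tendsto_fls_iff_absK ..

lemma continuous_on_fls_modulus:
  fixes u :: "'x::topological_space \<Rightarrow> 'a::{field,finite} fls"
    and F :: "'a fls \<Rightarrow> 'b::{field,finite} fls"
  assumes "continuous_on S u" and "isCont \<omega> 0" and "\<omega> 0 = 0"
    and "\<And>y z. absK (F y - F z) \<le> \<omega> (absK (y - z))"
  shows "continuous_on S (\<lambda>x. F (u x))"
  unfolding continuous_on_fls_iff
proof
  fix x assume "x \<in> S"
  then have "((\<lambda>y. absK (u y - u x)) \<longlongrightarrow> 0) (at x within S)"
    using assms(1) by (simp add: continuous_on_fls_iff)
  from isCont_tendsto_compose[OF assms(2) this]
  have lim: "((\<lambda>y. \<omega> (absK (u y - u x))) \<longlongrightarrow> 0) (at x within S)"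
    unfolding assms(3) .
  show "((\<lambda>y. absK (F (u y) - F (u x))) \<longlongrightarrow> 0) (at x within S)"
    by (rule tendsto_0_if_nonneg_le[OF absK_nonneg assms(4) lim])
qed

lemma continuous_on_fls_add:
  fixes u w :: "'x::topological_space \<Rightarrow> 'a::{field,finite} fls"
  assumes "continuous_on S u" and "continuous_on S w"
  shows "continuous_on S (\<lambda>x. u x + w x)"
  unfolding continuous_on_fls_iff
proof
  fix x assume "x \<in> S"
  then have "((\<lambda>y. absK (u y - u x)) \<longlongrightarrow> 0) (at x within S)"
    and "((\<lambda>y. absK (w y - w x)) \<longlongrightarrow> 0) (at x within S)"
    using assms by (simp_all add: continuous_on_fls_iff)
  from tendsto_max[OF this]
  have lim: "((\<lambda>y. max (absK (u y - u x)) (absK (w y - w x))) \<longlongrightarrow> 0) (at x within S)"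
    by simp
  have "absK ((u y + w y) - (u x + w x)) \<le> max (absK (u y - u x)) (absK (w y - w x))" for y
    using absK_add_le_max[of "u y - u x" "w y - w x"] by (simp add: algebra_simps)
  then show "((\<lambda>y. absK ((u y + w y) - (u x + w x))) \<longlongrightarrow> 0) (at x within S)"
    by (rule tendsto_0_if_nonneg_le[OF absK_nonneg _ lim])
qed

lemma continuous_on_fls_cmult:
  fixes u :: "'x::topological_space \<Rightarrow> 'a::{field,finite} fls"
  assumes "continuous_on S u"
  shows "continuous_on S (\<lambda>x. c * u x)"
proof (rule continuous_on_fls_modulus[OF assms, where \<omega> = "\<lambda>t. absK c * t"])
  show "isCont (\<lambda>t. absK c * t) 0" by (intro continuous_intros)
  fix y z :: "'a fls"
  have "c * y - c * z = c * (y - z)" by (simp add: right_diff_distrib)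
  then show "absK (c * y - c * z) \<le> absK c * absK (y - z)" by (simp add: absK_mult)
qed simp

lemma continuous_on_fls_diff:
  fixes u w :: "'x::topological_space \<Rightarrow> 'a::{field,finite} fls"
  assumes "continuous_on S u" and "continuous_on S w"
  shows "continuous_on S (\<lambda>x. u x - w x)"
proof -
  have "continuous_on S (\<lambda>x. u x + (- 1) * w x)"
    by (intro continuous_on_fls_add continuous_on_fls_cmult assms)
  then show ?thesis by simp
qed

lemma continuous_on_fls_sum:
  fixes u :: "'b \<Rightarrow> 'x::topological_space \<Rightarrow> 'a::{field,finite} fls"
  assumes "\<And>i. i \<in> A \<Longrightarrow> continuous_on S (u i)"
  shows "continuous_on S (\<lambda>x. \<Sum>i\<in>A. u i x)"
  using assms by (induction A rule: infinite_finite_induct) (auto intro!: continuous_on_fls_add)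

lemma continuous_on_fls_compose_power:
  fixes u :: "'x::topological_space \<Rightarrow> 'a::{field,finite} fls"
  assumes "continuous_on S u" and "d > 0"
  shows "continuous_on S (\<lambda>x. fls_compose_power (u x) d)"
proof (rule continuous_on_fls_modulus[OF assms(1), where \<omega> = "\<lambda>t. t ^ d"])
  show "isCont (\<lambda>t::real. t ^ d) 0" by (intro continuous_intros)
  show "(0::real) ^ d = 0" using assms(2) by simp
  fix y z :: "'a fls"
  show "absK (fls_compose_power y d - fls_compose_power z d) \<le> absK (y - z) ^ d"
    using absK_shift_compose_power[OF assms(2), where z = "y - z" and j = 0] by simp
qed

lemma continuous_on_fls_section:
  fixes u :: "'x::topological_space \<Rightarrow> 'a::{field,finite} fls"
  assumes "continuous_on S u" and "j < d"
  shows "continuous_on S (\<lambda>x. fls_section d j (u x))"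
proof (rule continuous_on_fls_modulus[OF assms(1), where \<omega> = "\<lambda>t. root d (real CARD('a) ^ j * t)"])
  show "isCont (\<lambda>t. root d (real CARD('a) ^ j * t)) 0" by (intro continuous_intros)
  show "absK (fls_section d j y - fls_section d j z) \<le> root d (real CARD('a) ^ j * absK (y - z))"
    for y z :: "'a fls"
    using absK_section_le_root[OF assms(2), of "y - z"] by (simp add: fls_section_diff)
qed simp

lemma bdd_above_absK_image:
  fixes u :: "'x::topological_space \<Rightarrow> 'a::{field,finite} fls"
  assumes "compact S" and "continuous_on S u"
  shows "bdd_above ((\<lambda>x. absK (u x)) ` S)"
proof -
  obtain B where B: "\<And>x. x \<in> S \<Longrightarrow> dist (u x) 0 \<le> B"
    using compact_imp_bounded[OF compact_continuous_image[OF assms(2,1)]]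
    unfolding bounded_any_center[of _ 0] by (auto simp: dist_commute)
  have "absK (u x) \<le> B powr log 2 (real CARD('a))" if "x \<in> S" for x
    unfolding absK_eq_dist_powr using B[OF that] card_field_ge_2[where 'a='a]
    by (intro powr_mono2) auto
  then show ?thesis by (rule bdd_aboveI2)
qed

section \<open>Expansions and sup-norms\<close>

lemma tendsto_root_0_iff:
  fixes X :: "'b \<Rightarrow> real"
  assumes "0 < d" and "\<And>n. 0 \<le> X n"
  shows "((\<lambda>n. root d (X n)) \<longlongrightarrow> 0) F \<longleftrightarrow> (X \<longlongrightarrow> 0) F"
proof
  assume "((\<lambda>n. root d (X n)) \<longlongrightarrow> 0) F"
  from tendsto_power[OF this, of d] show "(X \<longlongrightarrow> 0) F"
    using assms by (simp add: zero_power)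
next
  assume "(X \<longlongrightarrow> 0) F"
  from tendsto_real_root[OF this, of d] show "((\<lambda>n. root d (X n)) \<longlongrightarrow> 0) F"
    by simp
qed

lemma root_Sup:
  fixes A :: "real set"
  assumes "0 < d" and "A \<noteq> {}" and "bdd_above A"
  shows "root d (Sup A) = Sup (root d ` A)"
proof (rule continuous_at_Sup_mono)
  show "mono (root d)"
    using assms(1) by (auto intro: monoI real_root_le_mono)
  show "continuous (at_left (Sup A)) (root d)"
    by (rule continuous_at_imp_continuous_at_within) (rule isCont_real_root)
qed (use assms in auto)

lemma supnorm_absK_upper:
  fixes u :: "'x::topological_space \<Rightarrow> 'a::{field,finite} fls"
  assumes "compact S" and "continuous_on S u" and "x \<in> S"
  shows "absK (u x) \<le> supnorm absK S u"
  unfolding supnorm_def using bdd_above_absK_image[OF assms(1,2)] assms(3)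
  by (intro cSup_upper) auto

lemma supnorm_absK_nonneg:
  fixes u :: "'x::topological_space \<Rightarrow> 'a::{field,finite} fls"
  assumes "compact S" and "continuous_on S u"
  shows "0 \<le> supnorm absK S u"
  unfolding supnorm_def using bdd_above_absK_image[OF assms]
  by (intro cSup_upper) auto

lemma supnorm_absK_le_iff:
  fixes u :: "'x::topological_space \<Rightarrow> 'a::{field,finite} fls"
  assumes "compact S" and "continuous_on S u" and "0 \<le> B"
  shows "supnorm absK S u \<le> B \<longleftrightarrow> (\<forall>x\<in>S. absK (u x) \<le> B)"
  unfolding supnorm_def using bdd_above_absK_image[OF assms(1,2)] assms(3)
  by (subst cSup_le_iff) auto

lemma supnorm_root_absK:
  fixes u :: "'x::topological_space \<Rightarrow> 'a::{field,finite} fls"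
  assumes "compact S" and "continuous_on S u" and "0 < d"
  shows "supnorm (\<lambda>z. root d (absK z)) S u = root d (supnorm absK S u)"
  unfolding supnorm_def using bdd_above_absK_image[OF assms(1,2)] assms(3)
  by (subst root_Sup) (auto simp: image_image)

definition has_expansion ::
  "('b::ring \<Rightarrow> real) \<Rightarrow> 'x set \<Rightarrow> (nat \<Rightarrow> 'x \<Rightarrow> 'b) \<Rightarrow> ('x \<Rightarrow> 'b) \<Rightarrow> (nat \<Rightarrow> 'b) \<Rightarrow> bool" where
  "has_expansion av S g h a \<longleftrightarrow>
     (\<lambda>n. av (a n)) \<longlonglongrightarrow> 0 \<and> (\<lambda>N. supnorm av S (\<lambda>x. h x - (\<Sum>n<N. a n * g n x))) \<longlonglongrightarrow> 0"

lemma orthonormal_basis_iff: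
  "orthonormal_basis av S g \<longleftrightarrow>
     (\<forall>n. continuous_on S (g n)) \<and>
     (\<forall>h. continuous_on S h \<longrightarrow> (\<exists>!a. has_expansion av S g h a) \<and>
        (\<forall>a. has_expansion av S g h a \<longrightarrow> supnorm av S h = (SUP n. av (a n))))"
  unfolding orthonormal_basis_def has_expansion_def ..

lemma has_expansion_bdd_above:
  "has_expansion av S g h a \<Longrightarrow> bdd_above (range (\<lambda>n. av (a n)))"
  unfolding has_expansion_def
  by (intro Bseq_bdd_above convergent_imp_Bseq convergentI) blast

lemma continuous_on_fls_expansion_remainder:
  fixes g :: "nat \<Rightarrow> 'x::topological_space \<Rightarrow> 'a::{field,finite} fls"
  assumes "\<And>n. continuous_on S (g n)" and "continuous_on S h"
  shows "continuous_on S (\<lambda>x. h x - (\<Sum>n<N. a n * g n x))"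
  by (intro continuous_on_fls_diff continuous_on_fls_sum continuous_on_fls_cmult assms)

lemma orthonormal_basis_root_absK:
  fixes f :: "nat \<Rightarrow> 'x::topological_space \<Rightarrow> 'a::{field,finite} fls"
  assumes S: "compact S" and f: "orthonormal_basis absK S f" and d: "0 < d"
  shows "orthonormal_basis (\<lambda>z. root d (absK z)) S f"
proof -
  have f_cont: "\<And>n. continuous_on S (f n)"
    using f by (simp add: orthonormal_basis_iff)
  have expansion_iff: "has_expansion (\<lambda>z. root d (absK z)) S f h a \<longleftrightarrow> has_expansion absK S f h a"
    if h: "continuous_on S h" for h a
  proof -
    note remainder_cont = continuous_on_fls_expansion_remainder[OF f_cont h]
    have "0 \<le> supnorm absK S (\<lambda>x. h x - (\<Sum>n<N. a n * f n x))" for N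
      by (rule supnorm_absK_nonneg[OF S remainder_cont])
    then show ?thesis
      unfolding has_expansion_def supnorm_root_absK[OF S remainder_cont d]
      using d by (simp add: tendsto_root_0_iff absK_nonneg)
  qed
  have "supnorm (\<lambda>z. root d (absK z)) S h = (SUP n. root d (absK (a n)))"
    if h: "continuous_on S h" and a: "has_expansion absK S f h a" for h a
  proof -
    from has_expansion_bdd_above[OF a]
    have "root d (SUP n. absK (a n)) = (SUP n. root d (absK (a n)))"
      using d by (simp add: root_Sup image_image)
    then show ?thesis
      using f h a by (simp add: supnorm_root_absK[OF S h d] orthonormal_basis_iff)
  qed
  then show ?thesis
    using f by (simp add: orthonormal_basis_iff expansion_iff)
qed

section \<open>Substituting T^d into an orthonormal basis\<close>

lemma fls_section_remainder:
  fixes y :: "'a::idom fls"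
  assumes "j < d"
  shows "fls_section d j (y - (\<Sum>n\<in>A. c n * fls_compose_power (z n) d))
       = fls_section d j y - (\<Sum>n\<in>A. fls_section d j (c n) * z n)"
  using assms by (simp add: fls_section_diff fls_section_sum fls_section_mult_compose_power)

lemma has_expansion_section:
  fixes f :: "nat \<Rightarrow> 'x::topological_space \<Rightarrow> 'a::{field,finite} fls"
  assumes S: "compact S" and f_cont: "\<And>n. continuous_on S (f n)" and h: "continuous_on S h"
    and j: "j < d" and c: "has_expansion absK S (\<lambda>n x. fls_compose_power (f n x) d) h c"
  shows "has_expansion absK S f (\<lambda>x. fls_section d j (h x)) (\<lambda>n. fls_section d j (c n))"
proof -
  define q where "q = real CARD('a)"
  have d: "0 < d" using j by simp
  have section_le: "absK (fls_section d j y) \<le> root d (q ^ j * absK y)" for y :: "'a fls"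
    using absK_section_le_root[OF j, of y] by (simp add: q_def)
  have root_0: "(\<lambda>n. root d (q ^ j * X n)) \<longlonglongrightarrow> 0" if "X \<longlonglongrightarrow> 0" for X
    using tendsto_real_root[OF tendsto_mult_right_zero[OF that, of "q ^ j"], of d] by simp
  define R where "R N = supnorm absK S (\<lambda>x. h x - (\<Sum>n<N. c n * fls_compose_power (f n x) d))" for N
  note remainder_cont =
    continuous_on_fls_expansion_remainder[OF continuous_on_fls_compose_power[OF f_cont d] h]
  note section_remainder_cont =
    continuous_on_fls_expansion_remainder[OF f_cont continuous_on_fls_section[OF h j]]
  have "absK (fls_section d j (h x) - (\<Sum>n<N. fls_section d j (c n) * f n x)) \<le> root d (q ^ j * R N)"
    if "x \<in> S" for x N
  proof -
    have "absK (h x - (\<Sum>n<N. c n * fls_compose_power (f n x) d)) \<le> R N"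
      unfolding R_def by (rule supnorm_absK_upper[OF S remainder_cont that])
    from order.trans[OF section_le real_root_le_mono[OF d mult_left_mono[OF this]]]
    show ?thesis by (simp add: q_def fls_section_remainder[OF j])
  qed
  then have bound: "supnorm absK S (\<lambda>x. fls_section d j (h x) - (\<Sum>n<N. fls_section d j (c n) * f n x))
      \<le> root d (q ^ j * R N)" for N
    using supnorm_absK_nonneg[OF S remainder_cont]
    by (simp add: supnorm_absK_le_iff[OF S section_remainder_cont] real_root_ge_zero R_def q_def)
  have "(\<lambda>N. supnorm absK S (\<lambda>x. fls_section d j (h x) - (\<Sum>n<N. fls_section d j (c n) * f n x)))
      \<longlonglongrightarrow> 0"
  proof (rule tendsto_0_if_nonneg_le[OF supnorm_absK_nonneg[OF S section_remainder_cont] bound])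
    show "(\<lambda>N. root d (q ^ j * R N)) \<longlonglongrightarrow> 0"
      using c by (intro root_0) (simp add: has_expansion_def R_def)
  qed
  moreover have "(\<lambda>n. absK (fls_section d j (c n))) \<longlonglongrightarrow> 0"
  proof (rule tendsto_0_if_nonneg_le[OF absK_nonneg section_le])
    show "(\<lambda>n. root d (q ^ j * absK (c n))) \<longlonglongrightarrow> 0"
      using c by (intro root_0) (simp add: has_expansion_def)
  qed
  ultimately show ?thesis
    by (simp add: has_expansion_def)
qed

lemma has_expansion_of_sections:
  fixes f :: "nat \<Rightarrow> 'x::topological_space \<Rightarrow> 'a::{field,finite} fls"
  assumes S: "compact S" and f_cont: "\<And>n. continuous_on S (f n)" and h: "continuous_on S h"
    and d: "0 < d" and A: "\<And>j. j < d \<Longrightarrow> has_expansion absK S f (\<lambda>x. fls_section d j (h x)) (A j)"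
  shows "has_expansion absK S (\<lambda>n x. fls_compose_power (f n x) d) h
           (\<lambda>n. fls_of_sections d (\<lambda>j. A j n))"
proof -
  define c where "c n = fls_of_sections d (\<lambda>j. A j n)" for n
  have section_c: "fls_section d j (c n) = A j n" if "j < d" for j n
    using that by (simp add: c_def fls_section_of_sections)
  have sum_0: "(\<lambda>n. \<Sum>j<d. X j n ^ d) \<longlonglongrightarrow> 0" if "\<And>j. j < d \<Longrightarrow> X j \<longlonglongrightarrow> 0" for X :: "nat \<Rightarrow> nat \<Rightarrow> real"
  proof -
    have "(\<lambda>n. \<Sum>j<d. X j n ^ d) \<longlonglongrightarrow> (\<Sum>j<d. 0 ^ d)"
      using that by (intro tendsto_sum tendsto_power) simp
    then show ?thesis using d by (simp add: zero_power)
  qed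
  have "(\<lambda>n. absK (c n)) \<longlonglongrightarrow> 0"
  proof (rule tendsto_0_if_nonneg_le[OF absK_nonneg])
    show "absK (c n) \<le> (\<Sum>j<d. absK (A j n) ^ d)" for n
      using absK_le_sum_sections[OF d, of "c n"] by (simp add: section_c)
    show "(\<lambda>n. \<Sum>j<d. absK (A j n) ^ d) \<longlonglongrightarrow> 0"
      using A by (intro sum_0) (simp add: has_expansion_def)
  qed
  moreover have "(\<lambda>N. supnorm absK S (\<lambda>x. h x - (\<Sum>n<N. c n * fls_compose_power (f n x) d))) \<longlonglongrightarrow> 0"
  proof -
    define R where "R j N = supnorm absK S (\<lambda>x. fls_section d j (h x) - (\<Sum>n<N. A j n * f n x))" for j N
    note remainder_cont =
      continuous_on_fls_expansion_remainder[OF continuous_on_fls_compose_power[OF f_cont d] h]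
    have "absK (h x - (\<Sum>n<N. c n * fls_compose_power (f n x) d)) \<le> (\<Sum>j<d. R j N ^ d)"
      if "x \<in> S" for x N
    proof -
      have "absK (h x - (\<Sum>n<N. c n * fls_compose_power (f n x) d))
          \<le> (\<Sum>j<d. absK (fls_section d j (h x - (\<Sum>n<N. c n * fls_compose_power (f n x) d))) ^ d)"
        by (rule absK_le_sum_sections[OF d])
      also have "\<dots> \<le> (\<Sum>j<d. R j N ^ d)"
      proof (rule sum_mono)
        fix j assume "j \<in> {..<d}"
        then have j: "j < d" by simp
        have "absK (fls_section d j (h x) - (\<Sum>n<N. A j n * f n x)) \<le> R j N"
          unfolding R_def using that
          by (intro supnorm_absK_upper S continuous_on_fls_expansion_remainder f_cont
              continuous_on_fls_section h j)
        then show "absK (fls_section d j (h x - (\<Sum>n<N. c n * fls_compose_power (f n x) d))) ^ d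
            \<le> R j N ^ d"
          using j by (simp add: fls_section_remainder section_c power_mono absK_nonneg)
      qed
      finally show ?thesis .
    qed
    moreover have "0 \<le> (\<Sum>j<d. R j N ^ d)" for N
    proof (intro sum_nonneg zero_le_power)
      fix j assume "j \<in> {..<d}"
      then show "0 \<le> R j N"
        unfolding R_def
        by (intro supnorm_absK_nonneg S continuous_on_fls_expansion_remainder f_cont
            continuous_on_fls_section h) simp
    qed
    ultimately have "supnorm absK S (\<lambda>x. h x - (\<Sum>n<N. c n * fls_compose_power (f n x) d))
        \<le> (\<Sum>j<d. R j N ^ d)" for N
      by (simp add: supnorm_absK_le_iff[OF S remainder_cont])
    then show ?thesis
    proof (rule tendsto_0_if_nonneg_le[OF supnorm_absK_nonneg[OF S remainder_cont]])
      show "(\<lambda>N. \<Sum>j<d. R j N ^ d) \<longlonglongrightarrow> 0"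
        using A by (intro sum_0) (simp add: has_expansion_def R_def)
    qed
  qed
  ultimately show ?thesis
    by (simp add: has_expansion_def c_def)
qed

lemma supnorm_eq_SUP_compose_power_expansion:
  fixes f :: "nat \<Rightarrow> 'x::topological_space \<Rightarrow> 'a::{field,finite} fls"
  assumes S: "compact S" and f: "orthonormal_basis absK S f" and h: "continuous_on S h"
    and d: "0 < d" and c: "has_expansion absK S (\<lambda>n x. fls_compose_power (f n x) d) h c"
  shows "supnorm absK S h = (SUP n. absK (c n))"
proof -
  define q where "q = real CARD('a)"
  have f_cont: "\<And>n. continuous_on S (f n)"
    and f_norm: "\<And>h a. continuous_on S h \<Longrightarrow> has_expansion absK S f h a \<Longrightarrow>
                    supnorm absK S h = (SUP n. absK (a n))"
    using f by (auto simp: orthonormal_basis_iff)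
  have sections_iff: "(\<forall>x\<in>S. absK (fls_section d j (h x)) \<le> r) \<longleftrightarrow> (\<forall>n. absK (fls_section d j (c n)) \<le> r)"
    if j: "j < d" and r: "0 \<le> r" for j r
  proof -
    note section_cont = continuous_on_fls_section[OF h j]
    note section_exp = has_expansion_section[OF S f_cont h j c]
    have "(\<forall>x\<in>S. absK (fls_section d j (h x)) \<le> r) \<longleftrightarrow> supnorm absK S (\<lambda>x. fls_section d j (h x)) \<le> r"
      by (rule supnorm_absK_le_iff[OF S section_cont r, symmetric])
    also have "\<dots> \<longleftrightarrow> (SUP n. absK (fls_section d j (c n))) \<le> r"
      by (simp add: f_norm[OF section_cont section_exp])
    also have "\<dots> \<longleftrightarrow> (\<forall>n. absK (fls_section d j (c n)) \<le> r)"
      by (simp add: cSUP_le_iff has_expansion_bdd_above[OF section_exp])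
    finally show ?thesis .
  qed
  have bounds_iff: "supnorm absK S h \<le> B \<longleftrightarrow> (SUP n. absK (c n)) \<le> B" if B: "0 \<le> B" for B
  proof -
    have root_nonneg: "0 \<le> root d (q ^ j * B)" for j
      using B by (simp add: real_root_ge_zero q_def)
    have "supnorm absK S h \<le> B \<longleftrightarrow> (\<forall>x\<in>S. absK (h x) \<le> B)"
      by (rule supnorm_absK_le_iff[OF S h B])
    also have "\<dots> \<longleftrightarrow> (\<forall>j<d. \<forall>x\<in>S. absK (fls_section d j (h x)) \<le> root d (q ^ j * B))"
      unfolding absK_le_iff_sections[OF d B] q_def by blast
    also have "\<dots> \<longleftrightarrow> (\<forall>j<d. \<forall>n. absK (fls_section d j (c n)) \<le> root d (q ^ j * B))"
      using sections_iff[OF _ root_nonneg] by blast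
    also have "\<dots> \<longleftrightarrow> (\<forall>n. absK (c n) \<le> B)"
      unfolding absK_le_iff_sections[OF d B] q_def by blast
    also have "\<dots> \<longleftrightarrow> (SUP n. absK (c n)) \<le> B"
      by (simp add: cSUP_le_iff has_expansion_bdd_above[OF c])
    finally show ?thesis .
  qed
  have "0 \<le> supnorm absK S h"
    by (rule supnorm_absK_nonneg[OF S h])
  moreover have "0 \<le> (SUP n. absK (c n))"
    using cSUP_upper[OF _ has_expansion_bdd_above[OF c], of 0] absK_nonneg[of "c 0"] by simp
  ultimately show ?thesis
    using bounds_iff by (meson antisym order_refl)
qed

theorem orthonormal_basis_compose_power:
  fixes f :: "nat \<Rightarrow> 'x::topological_space \<Rightarrow> 'a::{field,finite} fls"
  assumes S: "compact S" and f: "orthonormal_basis absK S f" and d: "0 < d"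
  shows "orthonormal_basis absK S (\<lambda>n x. fls_compose_power (f n x) d)"
  unfolding orthonormal_basis_iff
proof (intro conjI allI impI)
  have f_cont: "\<And>n. continuous_on S (f n)"
    and f_ex1: "\<And>h. continuous_on S h \<Longrightarrow> \<exists>!a. has_expansion absK S f h a"
    using f by (auto simp: orthonormal_basis_iff)
  show "continuous_on S (\<lambda>x. fls_compose_power (f n x) d)" for n
    by (rule continuous_on_fls_compose_power[OF f_cont d])
  fix h :: "'x \<Rightarrow> 'a fls" assume h: "continuous_on S h"
  show "\<exists>!c. has_expansion absK S (\<lambda>n x. fls_compose_power (f n x) d) h c"
  proof (rule ex_ex1I)
    have "\<forall>j. \<exists>a. j < d \<longrightarrow> has_expansion absK S f (\<lambda>x. fls_section d j (h x)) a"
      using f_ex1[OF continuous_on_fls_section[OF h]] by blast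
    then obtain A where "\<And>j. j < d \<Longrightarrow> has_expansion absK S f (\<lambda>x. fls_section d j (h x)) (A j)"
      by metis
    then have "has_expansion absK S (\<lambda>n x. fls_compose_power (f n x) d) h
        (\<lambda>n. fls_of_sections d (\<lambda>j. A j n))"
      by (rule has_expansion_of_sections[OF S f_cont h d])
    then show "\<exists>c. has_expansion absK S (\<lambda>n x. fls_compose_power (f n x) d) h c"
      by (rule exI[of _ "\<lambda>n. fls_of_sections d (\<lambda>j. A j n)"])
  next
    fix c c'
    assume c: "has_expansion absK S (\<lambda>n x. fls_compose_power (f n x) d) h c"
      and c': "has_expansion absK S (\<lambda>n x. fls_compose_power (f n x) d) h c'"
    have sections_eq: "fls_section d j (c n) = fls_section d j (c' n)" if j: "j < d" for j n
    proof -
      have "(\<lambda>n. fls_section d j (c n)) = (\<lambda>n. fls_section d j (c' n))"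
        using f_ex1[OF continuous_on_fls_section[OF h j]]
          has_expansion_section[OF S f_cont h j c] has_expansion_section[OF S f_cont h j c']
        by blast
      then show ?thesis by (rule fun_cong)
    qed
    show "c = c'"
    proof
      fix n show "c n = c' n"
        using d sections_eq by (rule fls_sections_eqI)
    qed
  qed
  show "supnorm absK S h = (SUP n. absK (c n))"
    if "has_expansion absK S (\<lambda>n x. fls_compose_power (f n x) d) h c" for c
    by (rule supnorm_eq_SUP_compose_power_expansion[OF S f h d that])
qed

lemma fls_compose_power_inject:
  assumes "d > 0"
  shows "fls_compose_power x d = fls_compose_power y d \<longleftrightarrow> x = y"
proof
  assume eq: "fls_compose_power x d = fls_compose_power y d"
  show "x = y"
  proof (rule fls_eqI)
    fix k
    have "fls_compose_power x d $$ (k * int d) = fls_compose_power y d $$ (k * int d)"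
      by (simp only: eq)
    then show "x $$ k = y $$ k"
      using assms by (simp add: fls_nth_compose_power)
  qed
qed simp

section \<open>q^m-th roots in K_m\<close>

text \<open>In the model \<open>K\<^sub>m = F\<^sub>q((U))\<close>, \<open>T = U^(q^m)\<close>, the \<open>q^m\<close>-th root of \<open>y(T)\<close> is
  \<open>y(U)\<close>, which is represented by the same coefficient sequence as \<open>y\<close>.\<close>
lemma qroot_eq_self: "qroot m y = y"
  unfolding qroot_def embKm_def
  by (rule the_equality)
    (simp_all add: fls_power_card_pow_eq_compose_power fls_compose_power_inject)

lemma absKm_eq_root: "absKm m z = root (CARD('a) ^ m) (absK (z :: 'a::{field,finite} fls))"
proof (cases "z = 0")
  case False
  then have "root (CARD('a) ^ m) (absK z) = absK z powr (1 / real (CARD('a) ^ m))"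
    by (intro root_powr_inverse) (simp_all add: absK_def)
  then show ?thesis
    using False by (simp add: absK_def absKm_def powr_powr)
qed (simp add: absKm_def)

theorem proposition2:
  fixes S :: "'x::t2_space set" and f :: "nat \<Rightarrow> 'x \<Rightarrow> 'a::{field,finite} fls" and m :: nat
  assumes "compact S" and "totally_disconnected S"
    and "orthonormal_basis absK S f"
    and "m > 0"
  shows "orthonormal_basis absK S (\<lambda>n x. f n x ^ (CARD('a) ^ m))
       \<and> orthonormal_basis (absKm m) S (\<lambda>n x. qroot m (f n x))"
proof
  show "orthonormal_basis absK S (\<lambda>n x. f n x ^ (CARD('a) ^ m))"
    unfolding fls_power_card_pow_eq_compose_power
    by (rule orthonormal_basis_compose_power[OF assms(1,3)]) simp
  have "absKm m = (\<lambda>z :: 'a fls. root (CARD('a) ^ m) (absK z))"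
    by (simp add: fun_eq_iff absKm_eq_root)
  then show "orthonormal_basis (absKm m) S (\<lambda>n x. qroot m (f n x))"
    by (simp add: qroot_eq_self orthonormal_basis_root_absK[OF assms(1,3)])
qed

end
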